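(* Let $\mathbb{H}$ be the random $3$-partite $3$-uniform hypergraph on vertex set $V_1\cup V_2\cup V_3$ with $|V_1|=|V_2|=|V_3|=n$, in which each triple containing exactly one vertex from each $V_i$ is an edge independently with probability $1/2$. Then there exists a constant $\gamma>0$ such that with high probability $\mathbb{H}$ contains at least $\gamma n^2$ pairwise edge-disjoint perfect matchings.
   Context: A perfect matching of the hypergraph is a set of pairwise disjoint edges covering all $3n$ vertices. "With high probability" means with probability tending to $1$ as $n\to\infty$. *)

theory Defs
  imports "HOL-Probability.Probability"
begin

text \<open>Vertex classes V_1, V_2, V_3 are copies of {0..<n}; a vertex is a pair (i, x)
  with i \<in> {0,1,2} the class index and x < n. A crossing triple (a,b,c) has
  a \<in> V_1, b \<in> V_2, c \<in> V_3.\<close>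

definition triples :: "nat \<Rightarrow> (nat \<times> nat \<times> nat) set" where
  "triples n = {0..<n} \<times> {0..<n} \<times> {0..<n}"

definition vertices :: "nat \<Rightarrow> (nat \<times> nat) set" where
  "vertices n = {0,1,2} \<times> {0..<n}"

fun verts :: "nat \<times> nat \<times> nat \<Rightarrow> (nat \<times> nat) set" where
  "verts (a, b, c) = {(0, a), (1, b), (2, c)}"

definition perfect_matching :: "nat \<Rightarrow> (nat \<times> nat \<times> nat) set \<Rightarrow> (nat \<times> nat \<times> nat) set \<Rightarrow> bool" where
  "perfect_matching n H M \<longleftrightarrow>
     M \<subseteq> H \<and>
     (\<forall>e\<in>M. \<forall>f\<in>M. e \<noteq> f \<longrightarrow> verts e \<inter> verts f = {}) \<and>
     (\<Union>e\<in>M. verts e) = vertices n"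

definition random_hypergraph :: "nat \<Rightarrow> (nat \<times> nat \<times> nat) set pmf" where
  "random_hypergraph n =
     map_pmf (\<lambda>X. {e \<in> triples n. X e}) (Pi_pmf (triples n) False (\<lambda>_. bernoulli_pmf (1/2)))"

end

theory Submission
  imports Defs "HOL-Number_Theory.Cong" "HOL-Real_Asymp.Real_Asymp"
begin

(* Split the crossing triples into the n layers {(a, b, (b + t) mod n) | a, b < n}, t < n.
   In layer t the hypergraph is a random bipartite graph G_t between V_1 and V_2 with edge
   probability 1/2; every perfect matching of G_t (a bijection a \<mapsto> b) yields a perfect
   matching of H inside the layer, and matchings from different layers are edge-disjoint.
   By Hoeffding's inequality and a union bound, with high probability every G_t has all
   degrees above n/4 and more than s^2/4 edges in every s \<times> s square, s = n/8: the 4^n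
   squares are beaten by the exp(-s^2/8) bound. In such a graph Hall's condition survives
   the deletion of up to n/32 perfect matchings, so n/32 edge-disjoint perfect matchings can
   be extracted greedily from every layer, n^2/32 \<ge> n^2/64 of them in total. *)

section \<open>Hall's marriage theorem\<close>

definition sdr :: "'a set \<Rightarrow> ('a \<Rightarrow> 'b set) \<Rightarrow> ('a \<Rightarrow> 'b) \<Rightarrow> bool" where
  "sdr X N f \<longleftrightarrow> inj_on f X \<and> (\<forall>x\<in>X. f x \<in> N x)"

definition hall_condition :: "'a set \<Rightarrow> ('a \<Rightarrow> 'b set) \<Rightarrow> bool" where
  "hall_condition X N \<longleftrightarrow> (\<forall>A\<subseteq>X. card A \<le> card (\<Union>(N ` A)))"

lemma hall_condition_subset: "hall_condition X N \<Longrightarrow> A \<subseteq> X \<Longrightarrow> hall_condition A N"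
  unfolding hall_condition_def by (meson order.trans)

lemma sdr_glue:
  assumes "A \<subseteq> X" and f: "sdr A (\<lambda>x. N x \<inter> Y) f" and g: "sdr (X - A) (\<lambda>x. N x - Y) g"
  shows "sdr X N (\<lambda>x. if x \<in> A then f x else g x)"
  unfolding sdr_def
proof
  show "inj_on (\<lambda>x. if x \<in> A then f x else g x) X"
  proof (rule inj_onI)
    fix u v
    assume uv: "u \<in> X" "v \<in> X"
      and eq: "(if u \<in> A then f u else g u) = (if v \<in> A then f v else g v)"
    have sep: "f a \<noteq> g b" if "a \<in> A" "b \<in> X - A" for a b
      using f g that unfolding sdr_def by (metis DiffD2 IntD2)
    show "u = v"
    proof (cases "u \<in> A"; cases "v \<in> A")
      assume "u \<in> A" "v \<in> A"
      then show ?thesis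
        using eq f unfolding sdr_def by (auto dest: inj_onD)
    next
      assume "u \<notin> A" "v \<notin> A"
      then show ?thesis
        using eq uv g unfolding sdr_def by (auto dest: inj_onD)
    qed (use eq uv sep in \<open>auto simp: eq_commute\<close>)
  qed
  show "\<forall>x\<in>X. (if x \<in> A then f x else g x) \<in> N x"
    using f g unfolding sdr_def by auto
qed

lemma hall_condition_Diff_critical:
  assumes "finite X" "\<forall>x\<in>X. finite (N x)" "hall_condition X N"
    and "A \<subseteq> X" "card A = card (\<Union>(N ` A))"
  shows "hall_condition (X - A) (\<lambda>x. N x - \<Union>(N ` A))"
  unfolding hall_condition_def
proof (intro allI impI)
  fix B assume B: "B \<subseteq> X - A"
  have BA: "B \<union> A \<subseteq> X"
    using assms(4) B by blast
  have "finite A" "finite B"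
    using assms(1,4) B by (auto intro: finite_subset)
  with BA have fin: "finite A" "finite B" "finite (\<Union>(N ` (B \<union> A)))"
    using assms(2) by auto
  have "card B + card A = card (B \<union> A)"
    using B fin by (subst card_Un_disjoint) auto
  also have "\<dots> \<le> card (\<Union>(N ` (B \<union> A)))"
    using assms(3) BA unfolding hall_condition_def by blast
  also have "\<dots> = card (\<Union>(N ` (B \<union> A)) - \<Union>(N ` A)) + card (\<Union>(N ` A))"
  proof -
    have "card (\<Union>(N ` A)) \<le> card (\<Union>(N ` (B \<union> A)))"
      using fin(3) by (rule card_mono) auto
    moreover have "finite (\<Union>(N ` A))"
      using fin(3) by (rule finite_subset[rotated]) auto
    ultimately show ?thesis
      by (subst card_Diff_subset) auto
  qed
  also have "\<Union>(N ` (B \<union> A)) - \<Union>(N ` A) = \<Union>((\<lambda>x. N x - \<Union>(N ` A)) ` B)"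
    by auto
  finally show "card B \<le> card (\<Union>((\<lambda>x. N x - \<Union>(N ` A)) ` B))"
    using assms(5) by linarith
qed

lemma hall_condition_Diff_point:
  assumes "hall_condition X N"
    and no_critical: "\<And>A. A \<subseteq> X \<Longrightarrow> A \<noteq> {} \<Longrightarrow> A \<noteq> X \<Longrightarrow> card A \<noteq> card (\<Union>(N ` A))"
    and "x \<in> X"
  shows "hall_condition (X - {x}) (\<lambda>z. N z - {y})"
  unfolding hall_condition_def
proof (intro allI impI)
  fix B assume B: "B \<subseteq> X - {x}"
  show "card B \<le> card (\<Union>((\<lambda>z. N z - {y}) ` B))"
  proof (cases "B = {}")
    case False
    have "B \<noteq> X" "B \<subseteq> X"
      using B \<open>x \<in> X\<close> by auto
    then have "card B < card (\<Union>(N ` B))"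
      using assms(1) no_critical[of B] False unfolding hall_condition_def
      by (simp add: order_less_le)
    also have "\<dots> \<le> card (\<Union>(N ` B) - {y}) + 1"
      using diff_card_le_card_Diff[of "{y}" "\<Union>(N ` B)"] by simp
    also have "\<Union>(N ` B) - {y} = \<Union>((\<lambda>z. N z - {y}) ` B)"
      by auto
    finally show ?thesis by simp
  qed simp
qed

theorem hall_marriage:
  assumes "finite X" "\<forall>x\<in>X. finite (N x)" "hall_condition X N"
  shows "\<exists>f. sdr X N f"
  using assms
proof (induction "card X" arbitrary: X N rule: less_induct)
  case less
  show ?case
  proof (cases "\<exists>A. A \<subseteq> X \<and> A \<noteq> {} \<and> A \<noteq> X \<and> card A = card (\<Union>(N ` A))")
    case True
    then obtain A where A: "A \<subseteq> X" "A \<noteq> {}" "A \<noteq> X" "card A = card (\<Union>(N ` A))"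
      by blast
    have finA: "finite A"
      using A(1) less.prems(1) by (rule finite_subset)
    have smaller: "card A < card X" "card (X - A) < card X"
      using A(1,2,3) less.prems(1) by (auto intro!: psubset_card_mono)
    have "\<exists>f. sdr A N f"
      using less.hyps[OF smaller(1) finA] less.prems(2) A(1)
        hall_condition_subset[OF less.prems(3) A(1)] by blast
    moreover have "\<exists>g. sdr (X - A) (\<lambda>x. N x - \<Union>(N ` A)) g"
      by (rule less.hyps[OF smaller(2) finite_Diff[OF less.prems(1)]])
        (use less.prems(2) hall_condition_Diff_critical[OF less.prems A(1,4)] in auto)
    ultimately obtain f g where "sdr A N f" and g: "sdr (X - A) (\<lambda>x. N x - \<Union>(N ` A)) g"
      by blast
    then have f: "sdr A (\<lambda>x. N x \<inter> \<Union>(N ` A)) f"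
      unfolding sdr_def by blast
    show ?thesis
      using sdr_glue[OF A(1) f g] by blast
  next
    case no_critical: False
    show ?thesis
    proof (cases "X = {}")
      case True
      have "sdr {} N f" for f
        by (simp add: sdr_def)
      then show ?thesis
        using True by blast
    next
      case False
      then obtain x where x: "x \<in> X" by blast
      have "card {x} \<le> card (\<Union>(N ` {x}))"
        using less.prems(3) x unfolding hall_condition_def by blast
      then obtain y where y: "y \<in> N x" by fastforce
      have smaller: "card (X - {x}) < card X"
        using less.prems(1) x by (rule card_Diff1_less)
      have "hall_condition (X - {x}) (\<lambda>z. N z - {y})"
        using no_critical by (intro hall_condition_Diff_point[OF less.prems(3) _ x]) blast
      then have "\<exists>g. sdr (X - {x}) (\<lambda>z. N z - {y}) g"
        by (intro less.hyps[OF smaller finite_Diff[OF less.prems(1)]]) (use less.prems(2) in auto)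
      then obtain g where g: "sdr (X - {x}) (\<lambda>z. N z - {y}) g" ..
      have sub: "{x} \<subseteq> X"
        using x by blast
      have one: "sdr {x} (\<lambda>z. N z \<inter> {y}) (\<lambda>_. y)"
        using y unfolding sdr_def by simp
      show ?thesis
        using sdr_glue[OF sub one g] by blast
    qed
  qed
qed


section \<open>Dense bipartite graphs\<close>

lemma card_Image_singleton: "card (G `` {a}) = card (G \<inter> {a} \<times> UNIV)"
proof -
  have "G \<inter> {a} \<times> UNIV = Pair a ` (G `` {a})"
    by auto
  moreover have "inj_on (Pair a) (G `` {a})"
    by (rule inj_onI) simp
  ultimately show ?thesis
    by (simp add: card_image)
qed

lemma card_converse_Image_singleton: "card (G\<inverse> `` {b}) = card (G \<inter> UNIV \<times> {b})"
proof -
  have "G \<inter> UNIV \<times> {b} = (\<lambda>a. (a, b)) ` (G\<inverse> `` {b})"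
    by auto
  moreover have "inj_on (\<lambda>a. (a, b)) (G\<inverse> `` {b})"
    by (rule inj_onI) simp
  ultimately show ?thesis
    by (simp add: card_image)
qed

lemma card_Diff_Image_less:
  assumes "finite Y" "A \<subseteq> X" "s \<le> card A"
    and rectangles: "\<forall>A\<subseteq>X. \<forall>B\<subseteq>Y. card A = s \<longrightarrow> card B = s \<longrightarrow> A \<times> B \<inter> G \<noteq> {}"
  shows "card (Y - G `` A) < s"
proof (rule ccontr)
  assume "\<not> card (Y - G `` A) < s"
  then obtain B where B: "B \<subseteq> Y - G `` A" "card B = s"
    by (meson not_less obtain_subset_with_card_n)
  obtain A' where A': "A' \<subseteq> A" "card A' = s"
    using assms(3) by (meson obtain_subset_with_card_n)
  then have "A' \<times> B \<inter> G \<noteq> {}"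
    using rectangles assms(2) B by blast
  then show False
    using A' B by blast
qed

lemma Image_eq_if_card_Diff_less:
  assumes "finite X" "G \<subseteq> X \<times> Y" "card (X - A) < s"
    and deg_right: "\<forall>b\<in>Y. s \<le> card (G\<inverse> `` {b})"
  shows "G `` A = Y"
proof
  show "G `` A \<subseteq> Y"
    using assms(2) by blast
  show "Y \<subseteq> G `` A"
  proof
    fix b assume b: "b \<in> Y"
    have "G\<inverse> `` {b} \<subseteq> X"
      using assms(2) by blast
    moreover have "\<not> G\<inverse> `` {b} \<subseteq> X - A"
      using assms(1,3) deg_right b by (metis card_mono finite_Diff leD order_trans)
    ultimately show "b \<in> G `` A"
      by blast
  qed
qed

lemma hall_condition_if_degrees_and_rectangles:
  fixes G :: "('a \<times> 'b) set"
  assumes fin: "finite X" "finite Y" and G: "G \<subseteq> X \<times> Y" and "card X \<le> card Y" "1 \<le> s"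
    and deg_left: "\<forall>a\<in>X. s \<le> card (G `` {a})"
    and deg_right: "\<forall>b\<in>Y. s \<le> card (G\<inverse> `` {b})"
    and rectangles: "\<forall>A\<subseteq>X. \<forall>B\<subseteq>Y. card A = s \<longrightarrow> card B = s \<longrightarrow> A \<times> B \<inter> G \<noteq> {}"
  shows "hall_condition X (\<lambda>a. G `` {a})"
  unfolding hall_condition_def
proof (intro allI impI)
  fix A assume A: "A \<subseteq> X"
  have finA: "finite A"
    using A fin(1) by (rule finite_subset)
  have GA: "G `` A \<subseteq> Y" "finite (G `` A)"
    using fin(2) G by (auto intro: finite_subset)
  consider "A = {}" | "A \<noteq> {}" "card A \<le> s" | "s \<le> card A" "card A + s \<le> card Y"
    | "card Y < card A + s"
    by linarith
  then have "card A \<le> card (G `` A)"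
  proof cases
    case 1
    then show ?thesis by simp
  next
    case 2
    then obtain a where a: "a \<in> A" by blast
    have "card A \<le> card (G `` {a})"
      using 2 a A deg_left by force
    also have "\<dots> \<le> card (G `` A)"
      using a GA(2) by (intro card_mono) auto
    finally show ?thesis .
  next
    case 3
    have "card Y = card (Y - G `` A) + card (G `` A)"
      using GA fin(2) by (simp add: card_Diff_subset card_mono)
    then show ?thesis
      using card_Diff_Image_less[OF fin(2) A 3(1) rectangles] 3(2) by linarith
  next
    case 4
    have "card (X - A) = card X - card A"
      using finA A by (rule card_Diff_subset)
    then have "card (X - A) < s"
      using 4 assms(4,5) by arith
    then have "G `` A = Y"
      using Image_eq_if_card_Diff_less[OF fin(1) G _ deg_right] by blast
    moreover have "card A \<le> card X"
      using A fin(1) by (rule card_mono[rotated])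
    ultimately show ?thesis
      using assms(4) by simp
  qed
  moreover have "\<Union>((\<lambda>a. G `` {a}) ` A) = G `` A"
    by blast
  ultimately show "card A \<le> card (\<Union>((\<lambda>a. G `` {a}) ` A))"
    by simp
qed

definition matching_edges :: "'a set \<Rightarrow> (nat \<Rightarrow> 'a \<Rightarrow> 'b) \<Rightarrow> nat \<Rightarrow> ('a \<times> 'b) set" where
  "matching_edges X \<sigma> k = (\<Union>j<k. (\<lambda>a. (a, \<sigma> j a)) ` X)"

lemma card_matching_edges_Image: "card (matching_edges X \<sigma> k `` {a}) \<le> k"
proof -
  have "matching_edges X \<sigma> k `` {a} \<subseteq> (\<lambda>j. \<sigma> j a) ` {..<k}"
    unfolding matching_edges_def by auto
  then have "card (matching_edges X \<sigma> k `` {a}) \<le> card ((\<lambda>j. \<sigma> j a) ` {..<k})"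
    by (intro card_mono) auto
  also have "\<dots> \<le> k"
    using card_image_le[of "{..<k}" "\<lambda>j. \<sigma> j a"] by simp
  finally show ?thesis .
qed

lemma card_converse_matching_edges_Image:
  assumes "\<forall>j<k. inj_on (\<sigma> j) X"
  shows "card ((matching_edges X \<sigma> k)\<inverse> `` {b}) \<le> k"
proof -
  have "(matching_edges X \<sigma> k)\<inverse> `` {b} = (\<Union>j<k. {a\<in>X. \<sigma> j a = b})"
    unfolding matching_edges_def by auto
  also have "card \<dots> \<le> (\<Sum>j<k. card {a\<in>X. \<sigma> j a = b})"
    by (rule card_UN_le) simp
  also have "\<dots> \<le> (\<Sum>j<k. 1)"
  proof (rule sum_mono)
    fix j assume "j \<in> {..<k}"
    then have "inj_on (\<sigma> j) {a\<in>X. \<sigma> j a = b}"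
      using assms by (auto intro: inj_on_subset)
    then have "card {a\<in>X. \<sigma> j a = b} = card (\<sigma> j ` {a\<in>X. \<sigma> j a = b})"
      by (rule card_image[symmetric])
    also have "\<dots> \<le> card {b}"
      by (intro card_mono) auto
    finally show "card {a\<in>X. \<sigma> j a = b} \<le> 1"
      by simp
  qed
  finally show ?thesis by simp
qed

lemma card_rectangle_Int_matching_edges:
  assumes "finite A"
  shows "card (A \<times> B \<inter> matching_edges X \<sigma> k) \<le> k * card A"
proof -
  have "A \<times> B \<inter> matching_edges X \<sigma> k \<subseteq> (\<Union>j<k. (\<lambda>a. (a, \<sigma> j a)) ` A)"
    unfolding matching_edges_def by auto
  then have "card (A \<times> B \<inter> matching_edges X \<sigma> k) \<le> card (\<Union>j<k. (\<lambda>a. (a, \<sigma> j a)) ` A)"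
    using assms by (intro card_mono) auto
  also have "\<dots> \<le> (\<Sum>j<k. card ((\<lambda>a. (a, \<sigma> j a)) ` A))"
    by (rule card_UN_le) simp
  also have "\<dots> \<le> (\<Sum>j<k. card A)"
    by (intro sum_mono card_image_le assms)
  finally show ?thesis by simp
qed

lemma hall_condition_Diff_matching_edges:
  fixes G :: "('a \<times> 'b) set"
  assumes fin: "finite X" "finite Y" and G: "G \<subseteq> X \<times> Y" and "card X \<le> card Y" "1 \<le> s"
    and "m \<le> k" and inj: "\<forall>j<m. inj_on (\<sigma> j) X"
    and deg_left: "\<forall>a\<in>X. s + k \<le> card (G `` {a})"
    and deg_right: "\<forall>b\<in>Y. s + k \<le> card (G\<inverse> `` {b})"
    and rectangles: "\<forall>A\<subseteq>X. \<forall>B\<subseteq>Y. card A = s \<longrightarrow> card B = s \<longrightarrow> k * s < card (A \<times> B \<inter> G)"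
  shows "hall_condition X (\<lambda>a. (G - matching_edges X \<sigma> m) `` {a})"
proof -
  define R where "R = matching_edges X \<sigma> m"
  have finR: "finite R"
    using fin(1) unfolding R_def matching_edges_def by simp
  have "hall_condition X (\<lambda>a. (G - R) `` {a})"
  proof (rule hall_condition_if_degrees_and_rectangles[OF fin _ assms(4,5)])
    show "G - R \<subseteq> X \<times> Y"
      using G by blast
    show "\<forall>a\<in>X. s \<le> card ((G - R) `` {a})"
    proof
      fix a assume "a \<in> X"
      have "card (R `` {a}) \<le> m"
        unfolding R_def by (rule card_matching_edges_Image)
      then have "s \<le> card (G `` {a}) - card (R `` {a})"
        using deg_left \<open>a \<in> X\<close> \<open>m \<le> k\<close> by fastforce
      also have "\<dots> \<le> card (G `` {a} - R `` {a})"
        using finR by (intro diff_card_le_card_Diff) simp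
      also have "G `` {a} - R `` {a} = (G - R) `` {a}"
        by blast
      finally show "s \<le> card ((G - R) `` {a})" .
    qed
    show "\<forall>b\<in>Y. s \<le> card ((G - R)\<inverse> `` {b})"
    proof
      fix b assume "b \<in> Y"
      have "card (R\<inverse> `` {b}) \<le> m"
        unfolding R_def using inj by (rule card_converse_matching_edges_Image)
      then have "s \<le> card (G\<inverse> `` {b}) - card (R\<inverse> `` {b})"
        using deg_right \<open>b \<in> Y\<close> \<open>m \<le> k\<close> by fastforce
      also have "\<dots> \<le> card (G\<inverse> `` {b} - R\<inverse> `` {b})"
        using finR by (intro diff_card_le_card_Diff) simp
      also have "G\<inverse> `` {b} - R\<inverse> `` {b} = (G - R)\<inverse> `` {b}"
        by blast
      finally show "s \<le> card ((G - R)\<inverse> `` {b})" .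
    qed
    show "\<forall>A\<subseteq>X. \<forall>B\<subseteq>Y. card A = s \<longrightarrow> card B = s \<longrightarrow> A \<times> B \<inter> (G - R) \<noteq> {}"
    proof (intro allI impI)
      fix A B assume AB: "A \<subseteq> X" "B \<subseteq> Y" "card A = s" "card B = s"
      have "card (A \<times> B \<inter> R) \<le> m * s"
        unfolding R_def AB(3)[symmetric] using finite_subset[OF AB(1) fin(1)]
        by (rule card_rectangle_Int_matching_edges)
      moreover have "m * s \<le> k * s"
        using \<open>m \<le> k\<close> by simp
      moreover have "k * s < card (A \<times> B \<inter> G)"
        using rectangles AB by blast
      ultimately have "0 < card (A \<times> B \<inter> G) - card (A \<times> B \<inter> R)"
        by arith
      also have "\<dots> \<le> card (A \<times> B \<inter> G - A \<times> B \<inter> R)"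
        using finR by (intro diff_card_le_card_Diff) simp
      also have "A \<times> B \<inter> G - A \<times> B \<inter> R = A \<times> B \<inter> (G - R)"
        by blast
      finally show "A \<times> B \<inter> (G - R) \<noteq> {}"
        by auto
    qed
  qed
  then show ?thesis
    unfolding R_def .
qed

lemma disjoint_matchings_if_degrees_and_rectangles:
  fixes G :: "('a \<times> 'b) set"
  assumes fin: "finite X" "finite Y" and G: "G \<subseteq> X \<times> Y" and "card X \<le> card Y" "1 \<le> s"
    and deg_left: "\<forall>a\<in>X. s + k \<le> card (G `` {a})"
    and deg_right: "\<forall>b\<in>Y. s + k \<le> card (G\<inverse> `` {b})"
    and rectangles: "\<forall>A\<subseteq>X. \<forall>B\<subseteq>Y. card A = s \<longrightarrow> card B = s \<longrightarrow> k * s < card (A \<times> B \<inter> G)"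
  shows "\<exists>\<sigma>. \<forall>j<k. sdr X (\<lambda>a. G `` {a}) (\<sigma> j) \<and> (\<forall>i<j. \<forall>a\<in>X. \<sigma> i a \<noteq> \<sigma> j a)"
proof -
  have "\<exists>\<sigma>. \<forall>j<m. sdr X (\<lambda>a. G `` {a}) (\<sigma> j) \<and> (\<forall>i<j. \<forall>a\<in>X. \<sigma> i a \<noteq> \<sigma> j a)"
    if "m \<le> k" for m
    using that
  proof (induction m)
    case 0
    then show ?case by simp
  next
    case (Suc m)
    then obtain \<sigma> where \<sigma>: "\<forall>j<m. sdr X (\<lambda>a. G `` {a}) (\<sigma> j) \<and> (\<forall>i<j. \<forall>a\<in>X. \<sigma> i a \<noteq> \<sigma> j a)"
      by auto
    define R where "R = matching_edges X \<sigma> m"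
    have inj: "\<forall>j<m. inj_on (\<sigma> j) X"
      using \<sigma> unfolding sdr_def by blast
    have "m \<le> k"
      using Suc.prems by simp
    then have "hall_condition X (\<lambda>a. (G - R) `` {a})"
      unfolding R_def
      by (rule hall_condition_Diff_matching_edges[OF fin G assms(4,5) _ inj deg_left deg_right rectangles])
    moreover have "finite ((G - R) `` {a})" for a
      by (rule finite_subset[of _ Y]) (use G fin(2) in auto)
    ultimately obtain \<tau> where \<tau>: "sdr X (\<lambda>a. (G - R) `` {a}) \<tau>"
      using hall_marriage[of X "\<lambda>a. (G - R) `` {a}"] fin(1) by blast
    have \<tau>_new: "\<sigma> i a \<noteq> \<tau> a" if "i < m" "a \<in> X" for i a
    proof -
      have "(a, \<tau> a) \<notin> R"
        using \<tau> that(2) unfolding sdr_def by blast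
      moreover have "(a, \<sigma> i a) \<in> R"
        using that unfolding R_def matching_edges_def by blast
      ultimately show ?thesis
        by metis
    qed
    have "sdr X (\<lambda>a. G `` {a}) \<tau>"
      using \<tau> unfolding sdr_def by blast
    then show ?case
      using \<sigma> \<tau>_new by (intro exI[of _ "\<sigma>(m := \<tau>)"]) (auto simp: less_Suc_eq)
  qed
  then show ?thesis
    by blast
qed


section \<open>Perfect matchings inside layers\<close>

lemma card_image_disjoint_nonempty:
  assumes "\<forall>i\<in>I. \<forall>j\<in>I. i \<noteq> j \<longrightarrow> f i \<inter> f j = {}" "\<forall>i\<in>I. f i \<noteq> {}"
  shows "card (f ` I) = card I"
proof (rule card_image, rule inj_onI)
  fix i j assume ij: "i \<in> I" "j \<in> I" "f i = f j"
  show "i = j"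
  proof (rule ccontr)
    assume "i \<noteq> j"
    then have "f i = {}"
      using assms(1) ij by auto
    then show False
      using assms(2) ij(1) by blast
  qed
qed

lemma add_mod_right_cancel:
  fixes x y t n :: nat
  assumes "x < n" "y < n" "(x + t) mod n = (y + t) mod n"
  shows "x = y"
proof -
  have "[x = y] (mod n)"
    using assms(3) cong_add_rcancel_nat unfolding cong_def by blast
  then show ?thesis
    using assms(1,2) unfolding cong_def by simp
qed

lemma bij_betw_add_mod: "bij_betw (\<lambda>b. (b + t) mod n) {..<n} {..<n::nat}"
proof -
  have "inj_on (\<lambda>b. (b + t) mod n) {..<n}"
    by (rule inj_onI) (use add_mod_right_cancel in auto)
  moreover have "(\<lambda>b. (b + t) mod n) ` {..<n} = {..<n}"
    by (rule endo_inj_surj) (use calculation in auto)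
  ultimately show ?thesis
    unfolding bij_betw_def ..
qed

lemma perfect_matching_of_bijections:
  assumes "bij_betw \<beta> {..<n} {..<n}" "bij_betw \<gamma> {..<n} {..<n}"
    and "\<forall>a<n. (a, \<beta> a, \<gamma> a) \<in> H"
  shows "perfect_matching n H ((\<lambda>a. (a, \<beta> a, \<gamma> a)) ` {..<n})"
  unfolding perfect_matching_def
proof (intro conjI)
  show "(\<lambda>a. (a, \<beta> a, \<gamma> a)) ` {..<n} \<subseteq> H"
    using assms(3) by auto
  have inj: "inj_on \<beta> {..<n}" "inj_on \<gamma> {..<n}"
    using assms(1,2) by (auto dest: bij_betw_imp_inj_on)
  show "\<forall>e\<in>(\<lambda>a. (a, \<beta> a, \<gamma> a)) ` {..<n}. \<forall>f\<in>(\<lambda>a. (a, \<beta> a, \<gamma> a)) ` {..<n}.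
      e \<noteq> f \<longrightarrow> verts e \<inter> verts f = {}"
    using inj by (auto dest: inj_onD)
  have "(\<Union>e\<in>(\<lambda>a. (a, \<beta> a, \<gamma> a)) ` {..<n}. verts e)
      = {0} \<times> {..<n} \<union> {1} \<times> \<beta> ` {..<n} \<union> {2} \<times> \<gamma> ` {..<n}"
    by auto
  also have "\<dots> = vertices n"
    using assms(1,2) unfolding vertices_def bij_betw_def by auto
  finally show "(\<Union>e\<in>(\<lambda>a. (a, \<beta> a, \<gamma> a)) ` {..<n}. verts e) = vertices n" .
qed

(* The layers partition the crossing triples; layer t is identified with the complete
   bipartite graph {..<n} \<times> {..<n} through layer_triple n t. *)
definition layer_triple :: "nat \<Rightarrow> nat \<Rightarrow> nat \<times> nat \<Rightarrow> nat \<times> nat \<times> nat" where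
  "layer_triple n t = (\<lambda>(a, b). (a, b, (b + t) mod n))"

definition layer :: "nat \<Rightarrow> (nat \<times> nat \<times> nat) set \<Rightarrow> nat \<Rightarrow> (nat \<times> nat) set" where
  "layer n H t = {p \<in> {..<n} \<times> {..<n}. layer_triple n t p \<in> H}"

definition layer_matching :: "nat \<Rightarrow> nat \<Rightarrow> (nat \<Rightarrow> nat) \<Rightarrow> (nat \<times> nat \<times> nat) set" where
  "layer_matching n t \<sigma> = (\<lambda>a. layer_triple n t (a, \<sigma> a)) ` {..<n}"

lemma layer_subset: "layer n H t \<subseteq> {..<n} \<times> {..<n}"
  unfolding layer_def by blast

lemma perfect_matching_layer_matching:
  assumes "sdr {..<n} (\<lambda>a. layer n H t `` {a}) \<sigma>"
  shows "perfect_matching n H (layer_matching n t \<sigma>)"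
proof -
  have "\<sigma> ` {..<n} \<subseteq> {..<n}" "inj_on \<sigma> {..<n}"
    using assms unfolding sdr_def layer_def by auto
  then have \<sigma>: "bij_betw \<sigma> {..<n} {..<n}"
    unfolding bij_betw_def by (simp add: endo_inj_surj)
  have "bij_betw (\<lambda>a. (\<sigma> a + t) mod n) {..<n} {..<n}"
    using bij_betw_trans[OF \<sigma> bij_betw_add_mod] by (simp add: comp_def)
  moreover have "\<forall>a<n. (a, \<sigma> a, (\<sigma> a + t) mod n) \<in> H"
    using assms unfolding sdr_def layer_def layer_triple_def by auto
  ultimately have "perfect_matching n H ((\<lambda>a. (a, \<sigma> a, (\<sigma> a + t) mod n)) ` {..<n})"
    by (rule perfect_matching_of_bijections[OF \<sigma>])
  moreover have "layer_matching n t \<sigma> = (\<lambda>a. (a, \<sigma> a, (\<sigma> a + t) mod n)) ` {..<n}"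
    unfolding layer_matching_def layer_triple_def by simp
  ultimately show ?thesis
    by simp
qed

lemma layer_matchings_disjoint:
  assumes "t < n" "t' < n" "t \<noteq> t' \<or> (\<forall>a<n. \<sigma> a \<noteq> \<sigma>' a)"
  shows "layer_matching n t \<sigma> \<inter> layer_matching n t' \<sigma>' = {}"
proof (rule ccontr)
  assume "layer_matching n t \<sigma> \<inter> layer_matching n t' \<sigma>' \<noteq> {}"
  then obtain e where e: "e \<in> layer_matching n t \<sigma>" "e \<in> layer_matching n t' \<sigma>'"
    by blast
  obtain a where "a < n" "e = layer_triple n t (a, \<sigma> a)"
    using e(1) unfolding layer_matching_def by auto
  moreover obtain a' where "e = layer_triple n t' (a', \<sigma>' a')"
    using e(2) unfolding layer_matching_def by auto
  ultimately have a: "a < n" "\<sigma> a = \<sigma>' a" "(\<sigma> a + t) mod n = (\<sigma> a + t') mod n"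
    unfolding layer_triple_def by auto
  have "(t + \<sigma> a) mod n = (t' + \<sigma> a) mod n"
    using a(3) by (simp only: add.commute)
  then have "t = t'"
    by (rule add_mod_right_cancel[OF assms(1,2)])
  then show False
    using assms(3) a(1,2) by auto
qed

definition layer_matchings :: "nat \<Rightarrow> nat \<Rightarrow> (nat \<Rightarrow> nat \<Rightarrow> nat \<Rightarrow> nat) \<Rightarrow> (nat \<times> nat \<times> nat) set set"
  where "layer_matchings n k \<Sigma> = (\<lambda>(t, j). layer_matching n t (\<Sigma> t j)) ` ({..<n} \<times> {..<k})"

lemma layer_matchings_disjoint_card:
  assumes distinct: "\<And>t i j a. t < n \<Longrightarrow> i < j \<Longrightarrow> j < k \<Longrightarrow> a < n \<Longrightarrow> \<Sigma> t i a \<noteq> \<Sigma> t j a"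
  shows "\<forall>M\<in>layer_matchings n k \<Sigma>. \<forall>M'\<in>layer_matchings n k \<Sigma>. M \<noteq> M' \<longrightarrow> M \<inter> M' = {}"
    and "card (layer_matchings n k \<Sigma>) = n * k"
proof -
  define M where "M = (\<lambda>(t, j). layer_matching n t (\<Sigma> t j))"
  define I where "I = {..<n} \<times> {..<k}"
  have distinct': "\<Sigma> t j a \<noteq> \<Sigma> t j' a" if "t < n" "j < k" "j' < k" "j \<noteq> j'" "a < n" for t j j' a
    using that distinct[of t j j' a] distinct[of t j' j a] by (metis linorder_neq_iff)
  have disjoint: "M p \<inter> M q = {}" if pq: "p \<in> I" "q \<in> I" "p \<noteq> q" for p q
  proof -
    obtain t j t' j' where tj: "p = (t, j)" "q = (t', j')" "t < n" "t' < n" "j < k" "j' < k"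
      using pq(1,2) unfolding I_def by auto
    have "t \<noteq> t' \<or> (\<forall>a<n. \<Sigma> t j a \<noteq> \<Sigma> t' j' a)"
      using distinct' tj pq(3) by auto
    then show ?thesis
      unfolding M_def tj(1,2) using layer_matchings_disjoint[OF tj(3,4)] by simp
  qed
  then show "\<forall>M\<in>layer_matchings n k \<Sigma>. \<forall>M'\<in>layer_matchings n k \<Sigma>. M \<noteq> M' \<longrightarrow> M \<inter> M' = {}"
    unfolding layer_matchings_def M_def[symmetric] I_def[symmetric] by blast
  have "card (M ` I) = card I"
  proof (rule card_image_disjoint_nonempty)
    show "\<forall>p\<in>I. M p \<noteq> {}"
      unfolding M_def I_def layer_matching_def by auto
  qed (use disjoint in blast)
  then show "card (layer_matchings n k \<Sigma>) = n * k"
    unfolding layer_matchings_def M_def[symmetric] I_def[symmetric] by (simp add: I_def)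
qed

definition lines :: "nat \<Rightarrow> (nat \<times> nat) set set" where
  "lines n = (\<lambda>a. {a} \<times> {..<n}) ` {..<n} \<union> (\<lambda>b. {..<n} \<times> {b}) ` {..<n}"

definition squares :: "nat \<Rightarrow> nat \<Rightarrow> (nat \<times> nat) set set" where
  "squares n s = {A \<times> B | A B. A \<subseteq> {..<n} \<and> B \<subseteq> {..<n} \<and> card A = s \<and> card B = s}"

definition dense_layers :: "nat \<Rightarrow> (nat \<times> nat \<times> nat) set \<Rightarrow> bool" where
  "dense_layers n H \<longleftrightarrow>
     (\<forall>t<n. \<forall>D \<in> lines n \<union> squares n (n div 8). card D < 4 * card (layer n H t \<inter> D))"

lemma disjoint_sdrs_of_dense_layer:
  assumes "64 \<le> n" "dense_layers n H" "t < n"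
  shows "\<exists>\<sigma>. \<forall>j < n div 32. sdr {..<n} (\<lambda>a. layer n H t `` {a}) (\<sigma> j) \<and>
           (\<forall>i<j. \<forall>a\<in>{..<n}. \<sigma> i a \<noteq> \<sigma> j a)"
proof (rule disjoint_matchings_if_degrees_and_rectangles[where s = "n div 8"])
  let ?G = "layer n H t" and ?s = "n div 8" and ?k = "n div 32"
  have dense: "card D < 4 * card (?G \<inter> D)" if "D \<in> lines n \<union> squares n ?s" for D
    using assms(2,3) that unfolding dense_layers_def by simp
  have small: "4 * ?s + 4 * ?k < n"
    using assms(1) by simp
  have k_le_s: "4 * ?k \<le> ?s"
    by simp
  show "\<forall>a\<in>{..<n}. ?s + ?k \<le> card (?G `` {a})"
  proof
    fix a assume a: "a \<in> {..<n}"
    have "?G \<inter> {a} \<times> {..<n} = ?G \<inter> {a} \<times> UNIV"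
      using layer_subset by blast
    then have "n < 4 * card (?G `` {a})"
      using dense[of "{a} \<times> {..<n}"] a unfolding lines_def card_Image_singleton by simp
    then show "?s + ?k \<le> card (?G `` {a})"
      using small by linarith
  qed
  show "\<forall>b\<in>{..<n}. ?s + ?k \<le> card (?G\<inverse> `` {b})"
  proof
    fix b assume b: "b \<in> {..<n}"
    have "?G \<inter> {..<n} \<times> {b} = ?G \<inter> UNIV \<times> {b}"
      using layer_subset by blast
    then have "n < 4 * card (?G\<inverse> `` {b})"
      using dense[of "{..<n} \<times> {b}"] b unfolding lines_def card_converse_Image_singleton by simp
    then show "?s + ?k \<le> card (?G\<inverse> `` {b})"
      using small by linarith
  qed
  show "\<forall>A\<subseteq>{..<n}. \<forall>B\<subseteq>{..<n}. card A = ?s \<longrightarrow> card B = ?s \<longrightarrow> ?k * ?s < card (A \<times> B \<inter> ?G)"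
  proof (intro allI impI)
    fix A B assume AB: "A \<subseteq> {..<n}" "B \<subseteq> {..<n}" "card A = ?s" "card B = ?s"
    then have "A \<times> B \<in> squares n ?s"
      unfolding squares_def by blast
    then have "card (A \<times> B) < 4 * card (?G \<inter> A \<times> B)"
      using dense by blast
    then have "?s * ?s < 4 * card (A \<times> B \<inter> ?G)"
      using AB by (simp add: card_cartesian_product Int_commute)
    moreover have "4 * (?k * ?s) \<le> ?s * ?s"
      using mult_le_mono1[OF k_le_s, of ?s] by (simp only: mult.assoc)
    ultimately show "?k * ?s < card (A \<times> B \<inter> ?G)"
      by linarith
  qed
  show "1 \<le> ?s"
    using assms(1) by linarith
qed (auto simp: layer_subset)

lemma edge_disjoint_perfect_matchings_if_dense_layers:
  assumes "64 \<le> n" "dense_layers n H"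
  shows "\<exists>F. (\<forall>M\<in>F. perfect_matching n H M) \<and> (\<forall>M\<in>F. \<forall>M'\<in>F. M \<noteq> M' \<longrightarrow> M \<inter> M' = {}) \<and>
           finite F \<and> real (card F) \<ge> 1/64 * real n ^ 2"
proof -
  define k where "k = n div 32"
  have "\<forall>t\<in>{..<n}. \<exists>\<sigma>. \<forall>j<k. sdr {..<n} (\<lambda>a. layer n H t `` {a}) (\<sigma> j) \<and>
      (\<forall>i<j. \<forall>a\<in>{..<n}. \<sigma> i a \<noteq> \<sigma> j a)"
    using disjoint_sdrs_of_dense_layer[OF assms] unfolding k_def by simp
  then obtain \<Sigma> where \<Sigma>: "\<forall>t\<in>{..<n}. \<forall>j<k. sdr {..<n} (\<lambda>a. layer n H t `` {a}) (\<Sigma> t j) \<and>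
      (\<forall>i<j. \<forall>a\<in>{..<n}. \<Sigma> t i a \<noteq> \<Sigma> t j a)"
    by (rule bchoice[elim_format]) blast
  have "\<Sigma> t i a \<noteq> \<Sigma> t j a" if "t < n" "i < j" "j < k" "a < n" for t i j a
    using \<Sigma> that by auto
  note family = layer_matchings_disjoint_card[of n k \<Sigma>, OF this]
  have "real n / 64 \<le> real k"
  proof -
    have "n \<le> k * 32 + 31"
      unfolding k_def by simp
    then show ?thesis
      using assms(1) by linarith
  qed
  have "1/64 * real n ^ 2 = real n * (real n / 64)"
    by (simp add: power2_eq_square)
  also have "\<dots> \<le> real n * real k"
    using \<open>real n / 64 \<le> real k\<close> by (intro mult_left_mono) auto
  also have "\<dots> = real (card (layer_matchings n k \<Sigma>))"
    using family(2) by simp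
  finally have "1/64 * real n ^ 2 \<le> real (card (layer_matchings n k \<Sigma>))" .
  moreover have "\<forall>M\<in>layer_matchings n k \<Sigma>. perfect_matching n H M"
    using \<Sigma> perfect_matching_layer_matching unfolding layer_matchings_def by auto
  moreover have "finite (layer_matchings n k \<Sigma>)"
    unfolding layer_matchings_def by simp
  ultimately show ?thesis
    using family(1) by (intro exI[of _ "layer_matchings n k \<Sigma>"]) simp
qed


section \<open>Probability estimates\<close>

lemma card_Int_random_hypergraph:
  assumes "S \<subseteq> triples n"
  shows "map_pmf (\<lambda>H. card (H \<inter> S)) (random_hypergraph n) = binomial_pmf (card S) (1/2)"
proof -
  define P where "P = (\<lambda>_::nat \<times> nat \<times> nat. bernoulli_pmf (1/2))"
  have fin: "finite (triples n)"
    unfolding triples_def by simp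
  have "map_pmf (\<lambda>H. card (H \<inter> S)) (random_hypergraph n)
      = map_pmf (\<lambda>X. card {e\<in>S. X e}) (Pi_pmf (triples n) False P)"
    unfolding random_hypergraph_def P_def map_pmf_comp
    by (intro map_pmf_cong refl arg_cong[where f = card]) (use assms in auto)
  also have "\<dots> = map_pmf (\<lambda>X. card {e\<in>S. X e})
      (map_pmf (\<lambda>X e. if e \<in> S then X e else False) (Pi_pmf (triples n) False P))"
    unfolding map_pmf_comp by (intro map_pmf_cong refl arg_cong[where f = card]) auto
  also have "\<dots> = map_pmf (\<lambda>X. card {e\<in>S. X e}) (Pi_pmf S False P)"
    by (subst Pi_pmf_subset[OF fin assms]) (rule refl)
  also have "\<dots> = binomial_pmf (card S) (1/2)"
    unfolding P_def
    by (rule binomial_pmf_altdef'[symmetric]) (use fin assms in \<open>auto intro: finite_subset\<close>)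
  finally show ?thesis .
qed

lemma prob_card_Int_random_hypergraph_le_quarter:
  assumes "S \<subseteq> triples n" "S \<noteq> {}"
  shows "measure_pmf.prob (random_hypergraph n) {H. 4 * card (H \<inter> S) \<le> card S}
           \<le> exp (- real (card S) / 8)"
proof -
  define m where "m = card S"
  have "m > 0"
    using assms finite_subset[of S "triples n"] unfolding m_def triples_def
    by (auto simp: card_gt_0_iff)
  have "measure_pmf.prob (random_hypergraph n) {H. 4 * card (H \<inter> S) \<le> m}
      = measure_pmf.prob (map_pmf (\<lambda>H. card (H \<inter> S)) (random_hypergraph n)) {x. 4 * x \<le> m}"
    by (simp add: measure_map_pmf vimage_def)
  also have "\<dots> = measure_pmf.prob (binomial_pmf m (1/2)) {x. real x \<le> real m * (1/2) - real m / 4}"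
    unfolding card_Int_random_hypergraph[OF assms(1)] m_def[symmetric]
    by (rule arg_cong[where f = "measure_pmf.prob _"]) auto
  also have "\<dots> \<le> exp (- 2 * (real m / 4)\<^sup>2 / real m)"
    by (rule binomial_distribution.prob_le) (use \<open>m > 0\<close> in \<open>auto simp: binomial_distribution_def\<close>)
  also have "- 2 * (real m / 4)\<^sup>2 / real m = - real m / 8"
    using \<open>m > 0\<close> by (simp add: power2_eq_square field_simps)
  finally show ?thesis
    unfolding m_def .
qed

lemma prob_sparse_layer:
  assumes "D \<subseteq> {..<n} \<times> {..<n}" "D \<noteq> {}"
  shows "measure_pmf.prob (random_hypergraph n) {H. 4 * card (layer n H t \<inter> D) \<le> card D}
           \<le> exp (- real (card D) / 8)"
proof -
  let ?S = "layer_triple n t ` D"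
  have inj: "inj_on (layer_triple n t) D"
    by (rule inj_onI) (auto simp: layer_triple_def)
  have "card (layer n H t \<inter> D) = card (H \<inter> ?S)" for H
  proof -
    have "H \<inter> ?S = layer_triple n t ` (layer n H t \<inter> D)"
      using assms(1) unfolding layer_def by auto
    moreover have "inj_on (layer_triple n t) (layer n H t \<inter> D)"
      using inj by (rule inj_on_subset) blast
    ultimately show ?thesis
      by (simp add: card_image)
  qed
  moreover have "card ?S = card D"
    using inj by (rule card_image)
  moreover have "?S \<subseteq> triples n"
    using assms(1) unfolding triples_def layer_triple_def by auto
  ultimately show ?thesis
    using prob_card_Int_random_hypergraph_le_quarter[of ?S n] assms(2) by simp
qed

lemma measure_pmf_prob_UN_le:
  assumes "finite I" "\<And>i. i \<in> I \<Longrightarrow> measure_pmf.prob p (A i) \<le> c"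
  shows "measure_pmf.prob p (\<Union>i\<in>I. A i) \<le> real (card I) * c"
proof -
  have "measure_pmf.prob p (\<Union>i\<in>I. A i) \<le> (\<Sum>i\<in>I. measure_pmf.prob p (A i))"
    by (rule measure_pmf.finite_measure_subadditive_finite) (use assms(1) in auto)
  also have "\<dots> \<le> (\<Sum>i\<in>I. c)"
    by (rule sum_mono) (rule assms(2))
  finally show ?thesis
    by simp
qed

lemma lines_subset_card:
  assumes "D \<in> lines n"
  shows "D \<subseteq> {..<n} \<times> {..<n}" "card D = n"
  using assms unfolding lines_def by (auto simp: card_cartesian_product)

lemma card_lines_le: "card (lines n) \<le> 2 * n"
proof -
  have "card (lines n) \<le> card ((\<lambda>a. {a} \<times> {..<n}) ` {..<n}) + card ((\<lambda>b. {..<n} \<times> {b}) ` {..<n})"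
    unfolding lines_def by (rule card_Un_le)
  also have "\<dots> \<le> n + n"
    by (intro add_mono card_image_le[of "{..<n}", simplified])
  finally show ?thesis
    by simp
qed

lemma squares_subset_card:
  assumes "D \<in> squares n s"
  shows "D \<subseteq> {..<n} \<times> {..<n}" "card D = s * s"
  using assms unfolding squares_def by (auto simp: card_cartesian_product)

lemma squares_eq_image:
  "squares n s = (\<lambda>(A, B). A \<times> B) ` ({A. A \<subseteq> {..<n} \<and> card A = s} \<times> {B. B \<subseteq> {..<n} \<and> card B = s})"
  unfolding squares_def by auto

lemma finite_squares: "finite (squares n s)"
  unfolding squares_eq_image by simp

lemma card_squares_le: "card (squares n s) \<le> 4 ^ n"
proof -
  let ?C = "{A. A \<subseteq> {..<n} \<and> card A = s}"
  have "card ?C = n choose s"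
    using n_subsets[of "{..<n}" s] by simp
  then have C: "card ?C \<le> 2 ^ n"
    using binomial_le_pow2[of n s] by linarith
  have "card (squares n s) \<le> card (?C \<times> ?C)"
    unfolding squares_eq_image by (rule card_image_le) simp
  also have "\<dots> = card ?C * card ?C"
    by (rule card_cartesian_product)
  also have "\<dots> \<le> 2 ^ n * 2 ^ n"
    by (rule mult_le_mono[OF C C])
  also have "\<dots> = 4 ^ n"
    by (simp add: power_mult_distrib[symmetric])
  finally show ?thesis .
qed

lemma prob_sparse_layer_somewhere:
  assumes "finite \<D>" "\<And>D. D \<in> \<D> \<Longrightarrow> D \<subseteq> {..<n} \<times> {..<n}"
    and "\<And>D. D \<in> \<D> \<Longrightarrow> c \<le> real (card D)" "0 < c"
  shows "measure_pmf.prob (random_hypergraph n)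
           {H. \<exists>t<n. \<exists>D\<in>\<D>. 4 * card (layer n H t \<inter> D) \<le> card D}
         \<le> real n * real (card \<D>) * exp (- c / 8)"
proof -
  let ?E = "\<lambda>(t, D). {H. 4 * card (layer n H t \<inter> D) \<le> card D}"
  have "{H. \<exists>t<n. \<exists>D\<in>\<D>. 4 * card (layer n H t \<inter> D) \<le> card D} = (\<Union>i\<in>{..<n} \<times> \<D>. ?E i)"
    by auto
  also have "measure_pmf.prob (random_hypergraph n) \<dots> \<le> real (card ({..<n} \<times> \<D>)) * exp (- c / 8)"
  proof (rule measure_pmf_prob_UN_le)
    show "finite ({..<n} \<times> \<D>)"
      using assms(1) by simp
    fix i assume "i \<in> {..<n} \<times> \<D>"
    then obtain t D where i: "i = (t, D)" "D \<in> \<D>"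
      by blast
    then have "D \<noteq> {}"
      using assms(3,4) by fastforce
    then have "measure_pmf.prob (random_hypergraph n) (?E i) \<le> exp (- real (card D) / 8)"
      using prob_sparse_layer[OF assms(2)[OF i(2)]] i(1) by simp
    also have "\<dots> \<le> exp (- c / 8)"
      using assms(3)[OF i(2)] by simp
    finally show "measure_pmf.prob (random_hypergraph n) (?E i) \<le> exp (- c / 8)" .
  qed
  finally show ?thesis
    by (simp add: card_cartesian_product)
qed

lemma prob_not_dense_layers:
  assumes "64 \<le> n"
  shows "measure_pmf.prob (random_hypergraph n) {H. \<not> dense_layers n H}
           \<le> 2 * real n ^ 2 * exp (- real n / 8) + real n * 4 ^ n * exp (- ((real n / 8 - 1) ^ 2) / 8)"
proof -
  let ?R = "random_hypergraph n" and ?s = "n div 8" and ?c = "(real n / 8 - 1) ^ 2"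
  let ?sparse = "\<lambda>\<D>. {H. \<exists>t<n. \<exists>D\<in>\<D>. 4 * card (layer n H t \<inter> D) \<le> card D}"
  have c: "0 < real n / 8 - 1" "real n / 8 - 1 \<le> real ?s"
    using assms by linarith+
  then have "?c \<le> real (?s * ?s)"
    by (simp add: power2_eq_square mult_mono)
  have "0 < ?c"
    using c(1) by simp
  have "real (card (lines n)) \<le> real (2 * n)"
    using card_lines_le[of n] by (simp only: of_nat_le_iff)
  then have lines: "real n * real (card (lines n)) * exp (- real n / 8) \<le> real n * (2 * real n) * exp (- real n / 8)"
    by (auto intro!: mult_right_mono mult_left_mono)
  have "real (card (squares n ?s)) \<le> real (4 ^ n)"
    using card_squares_le[of n ?s] by (simp only: of_nat_le_iff)
  then have squares: "real n * real (card (squares n ?s)) * exp (- ?c / 8) \<le> real n * 4 ^ n * exp (- ?c / 8)"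
    by (auto intro!: mult_right_mono mult_left_mono)
  have finite_lines: "finite (lines n)"
    unfolding lines_def by simp
  have bad: "{H. \<not> dense_layers n H} = ?sparse (lines n) \<union> ?sparse (squares n ?s)"
    unfolding dense_layers_def by (auto simp: not_less)
  have "measure_pmf.prob ?R {H. \<not> dense_layers n H}
      \<le> measure_pmf.prob ?R (?sparse (lines n)) + measure_pmf.prob ?R (?sparse (squares n ?s))"
    unfolding bad by (rule measure_Un_le) simp_all
  also have "measure_pmf.prob ?R (?sparse (lines n)) \<le> real n * real (card (lines n)) * exp (- real n / 8)"
    using assms lines_subset_card[of _ n] by (intro prob_sparse_layer_somewhere finite_lines) auto
  also have "\<dots> \<le> real n * (2 * real n) * exp (- real n / 8)"
    by (rule lines)
  also have "measure_pmf.prob ?R (?sparse (squares n ?s)) \<le> real n * real (card (squares n ?s)) * exp (- ?c / 8)"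
    using squares_subset_card[of _ n ?s] \<open>?c \<le> real (?s * ?s)\<close> \<open>0 < ?c\<close>
    by (intro prob_sparse_layer_somewhere finite_squares) auto
  also have "\<dots> \<le> real n * 4 ^ n * exp (- ?c / 8)"
    by (rule squares)
  finally show ?thesis
    by (simp add: power2_eq_square algebra_simps)
qed

lemma prob_edge_disjoint_perfect_matchings_ge:
  assumes "64 \<le> n"
  shows "1 - (2 * real n ^ 2 * exp (- real n / 8) + real n * 4 ^ n * exp (- ((real n / 8 - 1) ^ 2) / 8))
    \<le> measure_pmf.prob (random_hypergraph n)
       {H. \<exists>F. (\<forall>M\<in>F. perfect_matching n H M) \<and>
               (\<forall>M\<in>F. \<forall>M'\<in>F. M \<noteq> M' \<longrightarrow> M \<inter> M' = {}) \<and>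
               finite F \<and> real (card F) \<ge> 1/64 * real n ^ 2}"
    (is "_ \<le> measure_pmf.prob ?R ?G")
proof -
  have "1 - (2 * real n ^ 2 * exp (- real n / 8) + real n * 4 ^ n * exp (- ((real n / 8 - 1) ^ 2) / 8))
      \<le> 1 - measure_pmf.prob ?R {H. \<not> dense_layers n H}"
    using prob_not_dense_layers[of n] assms by simp
  also have "\<dots> = measure_pmf.prob ?R {H. dense_layers n H}"
    using measure_pmf.prob_compl[of "{H. \<not> dense_layers n H}" ?R]
    by (simp add: Compl_eq_Diff_UNIV[symmetric] Collect_neg_eq[symmetric])
  also have "\<dots> \<le> measure_pmf.prob ?R ?G"
    using edge_disjoint_perfect_matchings_if_dense_layers[OF assms]
    by (intro measure_pmf.finite_measure_mono) auto
  finally show ?thesis .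
qed

theorem lemma7p2:
  shows "\<exists>\<gamma>::real. \<gamma> > 0 \<and>
    (\<lambda>n. measure_pmf.prob (random_hypergraph n)
       {H. \<exists>F. (\<forall>M\<in>F. perfect_matching n H M) \<and>
               (\<forall>M\<in>F. \<forall>M'\<in>F. M \<noteq> M' \<longrightarrow> M \<inter> M' = {}) \<and>
               finite F \<and> real (card F) \<ge> \<gamma> * real n ^ 2})
    \<longlonglongrightarrow> 1"
proof (intro exI[of _ "1/64"] conjI)
  show "(0::real) < 1/64"
    by simp
  let ?bound = "\<lambda>n::nat. 2 * real n ^ 2 * exp (- real n / 8) + real n * 4 ^ n * exp (- ((real n / 8 - 1) ^ 2) / 8)"
  have "?bound \<longlonglongrightarrow> 0"
    by real_asymp
  then have "(\<lambda>n. 1 - ?bound n) \<longlonglongrightarrow> 1"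
    using tendsto_diff[OF tendsto_const[of 1]] by fastforce
  then show "(\<lambda>n. measure_pmf.prob (random_hypergraph n)
       {H. \<exists>F. (\<forall>M\<in>F. perfect_matching n H M) \<and>
               (\<forall>M\<in>F. \<forall>M'\<in>F. M \<noteq> M' \<longrightarrow> M \<inter> M' = {}) \<and>
               finite F \<and> real (card F) \<ge> 1/64 * real n ^ 2}) \<longlonglongrightarrow> 1"
    (is "?P \<longlonglongrightarrow> 1")
  proof (rule tendsto_sandwich[where h = "\<lambda>_. 1", rotated 2])
    show "\<forall>\<^sub>F n in sequentially. 1 - ?bound n \<le> ?P n"
      by (rule eventually_sequentiallyI[of 64]) (rule prob_edge_disjoint_perfect_matchings_ge)
  qed simp_all
qed

end
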